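(* Let $p\in(0,1)$, $\gamma>0$, $B>0$, $w,N\in\mathbb{N}$, and let $(\xi_j^{(N)*})_{j=1}^N$ be the unique maximizer of $\mathcal{T}_N$. Then $\xi_j^{(N)*}>0$ for all $j\in\{1,\dots,N\}$ and $\xi_1^{(N)*}>\xi_2^{(N)*}>\dots>\xi_N^{(N)*}$.
   Context: Logarithms are base 2. For an admissible (nonnegative, with sum at most $B$) sequence $(x_j)_{j\ge1}$, $$\mathcal{T}_\infty(x_1,x_2,\dots)=\sum_{k=1}^{w}p^2(1-p)^{k-1}\frac{k}{2}\log_2\!\Big(1+\gamma\frac{B}{k}\Big)+\sum_{j=1}^{\infty}p(1-p)^{j+w-1}\frac12\log_2(1+\gamma x_j)+\sum_{k=1}^{\infty}p^2(1-p)^{k+w-1}\frac{w}{2}\log_2\!\Big(1+\gamma\frac{B-\sum_{j=1}^{k}x_j}{w}\Big).$$ For $N\in\mathbb{N}$ and $\xi_1,\dots,\xi_N\ge0$ with $\sum_{j=1}^N\xi_j\le B$, define $\mathcal{T}_N(\xi_1,\dots,\xi_N)=\mathcal{T}_\infty(\xi_1,\dots,\xi_N,0,0,\dots)$. $\mathcal{T}_N$ has a unique maximizer over this compact set, denoted $(\xi_j^{(N)*})_{j=1}^N$. *)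

theory Defs
  imports "HOL-Analysis.Analysis"
begin

text \<open>Sequences are functions nat => real indexed from 1 (value at 0 is ignored).
  T_inf p g B w x is the objective \<T>_\<infinity>(x_1, x_2, ...), with logarithms base 2.
  The infinite sums are written with index i = j - 1 (resp. i = k - 1).\<close>

definition T_inf :: "real \<Rightarrow> real \<Rightarrow> real \<Rightarrow> nat \<Rightarrow> (nat \<Rightarrow> real) \<Rightarrow> real" where
  "T_inf p g B w x =
     (\<Sum>k=1..w. p^2 * (1-p)^(k-1) * (real k / 2) * log 2 (1 + g * (B / real k)))
   + (\<Sum>i. p * (1-p)^(i+w) * (1/2) * log 2 (1 + g * x (i+1)))
   + (\<Sum>i. p^2 * (1-p)^(i+w) * (real w / 2)
           * log 2 (1 + g * ((B - (\<Sum>j=1..i+1. x j)) / real w)))"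

definition T_N :: "real \<Rightarrow> real \<Rightarrow> real \<Rightarrow> nat \<Rightarrow> nat \<Rightarrow> (nat \<Rightarrow> real) \<Rightarrow> real" where
  "T_N p g B w N xi = T_inf p g B w (\<lambda>j. if 1 \<le> j \<and> j \<le> N then xi j else 0)"

definition feasible_N :: "real \<Rightarrow> nat \<Rightarrow> (nat \<Rightarrow> real) \<Rightarrow> bool" where
  "feasible_N B N xi \<longleftrightarrow> (\<forall>j\<in>{1..N}. 0 \<le> xi j) \<and> (\<Sum>j=1..N. xi j) \<le> B"

definition is_maximizer_N :: "real \<Rightarrow> real \<Rightarrow> real \<Rightarrow> nat \<Rightarrow> nat \<Rightarrow> (nat \<Rightarrow> real) \<Rightarrow> bool" where
  "is_maximizer_N p g B w N xi \<longleftrightarrow> feasible_N B N xi \<and>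
     (\<forall>eta. feasible_N B N eta \<longrightarrow> T_N p g B w N eta \<le> T_N p g B w N xi)"

end

theory Submission
  imports Defs
begin

(* Up to a constant, T_N is  sum_k a_k/2 log(1 + g xi_k) + sum_k b_k w/2 log(1 + g (B - S_k)/w)
   with partial sums S_k, a_k = p (1-p)^(k-1+w), and weights b_k = reserve_weight (the geometric
   tail of the last series collapses into b_N) which telescope: a_m = sum_{k>=m} b_k.
   With u_k = 1/(1 + g xi_k) and v_k = 1/(1 + g (B - S_k)/w), the one-sided derivatives of T_N
   in the coordinate xi_m give  a_m u_m <= sum_{k>=m} b_k v_k  if the budget is not exhausted,
   and >= if xi_m > 0. An exhausted budget is impossible: beyond the last positive coordinate
   all v_k = 1, contradicting the second inequality there. Hence v_N < 1 and
   sum_{k>=m} b_k v_k < a_m, which forces every xi_m > 0 and equality. Equality reads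
   u_N = v_N and u_m = p v_m + (1-p) u_{m+1}; as v increases strictly, downward induction gives
   v <= u and then u strictly increasing, i.e. xi strictly decreasing. *)

definition psum :: "(nat \<Rightarrow> real) \<Rightarrow> nat \<Rightarrow> real" where
  "psum x k = (\<Sum>j=1..k. x j)"

definition reserve_weight :: "real \<Rightarrow> nat \<Rightarrow> nat \<Rightarrow> nat \<Rightarrow> real" where
  "reserve_weight p w N k = (if k < N then p^2 * (1-p)^(k-1+w) else p * (1-p)^(k-1+w))"

definition T_finite :: "real \<Rightarrow> real \<Rightarrow> real \<Rightarrow> nat \<Rightarrow> nat \<Rightarrow> (nat \<Rightarrow> real) \<Rightarrow> real" where
  "T_finite p g B w N x =
     (\<Sum>k=1..N. p * (1-p)^(k-1+w) / 2 * log 2 (1 + g * x k))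
   + (\<Sum>k=1..N. reserve_weight p w N k * (real w / 2) * log 2 (1 + g * ((B - psum x k) / real w)))"

lemma psum_truncate:
  "(\<Sum>j=1..k. if 1 \<le> j \<and> j \<le> N then x j else 0) = psum x (min k N)"
proof -
  have "(\<Sum>j=1..k. if 1 \<le> j \<and> j \<le> N then x j else 0) = (\<Sum>j\<in>{1..k} \<inter> {j. j \<le> N}. x j)"
    by (simp add: sum.inter_restrict)
  also have "{1..k} \<inter> {j. j \<le> N} = {1..min k N}" by auto
  finally show ?thesis by (simp add: psum_def)
qed

lemma psum_update:
  assumes "1 \<le> m"
  shows "psum (x(m := x m + t)) k = psum x k + (if m \<le> k then t else 0)"
proof -
  have "psum (x(m := x m + t)) k = (\<Sum>j=1..k. x j + (if j = m then t else 0))"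
    unfolding psum_def by (rule sum.cong) auto
  with assms show ?thesis by (simp add: sum.distrib psum_def)
qed

lemma sum_reserve_weight:
  assumes "1 \<le> m" "m \<le> N"
  shows "(\<Sum>k=m..N. reserve_weight p w N k) = p * (1-p)^(m-1+w)"
  using assms(2)
proof (induction m rule: inc_induct)
  case base
  show ?case by (simp add: reserve_weight_def)
next
  case (step k)
  have "(1-p)^(Suc k - 1 + w) = (1-p) * (1-p)^(k-1+w)"
    using step.hyps(1) assms(1) by (cases k) simp_all
  moreover have "p^2 * K + p * ((1-p) * K) = p * K" for K :: real
    by (simp add: power2_eq_square algebra_simps)
  ultimately have "p^2 * (1-p)^(k-1+w) + p * (1-p)^(Suc k - 1 + w) = p * (1-p)^(k-1+w)"
    by simp
  with step show ?case
    by (simp add: sum.atLeast_Suc_atMost reserve_weight_def)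
qed

lemma T_N_eq_T_finite:
  assumes "0 < p" "p < 1" "1 \<le> N"
  shows "T_N p g B w N x =
           (\<Sum>k=1..w. p^2 * (1-p)^(k-1) * (real k / 2) * log 2 (1 + g * (B / real k)))
         + T_finite p g B w N x"
proof -
  define x' where "x' = (\<lambda>j. if 1 \<le> j \<and> j \<le> N then x j else 0)"
  define a where "a = (\<lambda>k. p * (1-p)^(k-1+w) / 2 * log 2 (1 + g * x k))"
  define c where "c = (\<lambda>k. real w / 2 * log 2 (1 + g * ((B - psum x k) / real w)))"
  define f where "f = (\<lambda>i. p^2 * (1-p)^(i+w) * (real w / 2)
                          * log 2 (1 + g * ((B - (\<Sum>j=1..i+1. x' j)) / real w)))"
  have "(\<Sum>i. p * (1-p)^(i+w) * (1/2) * log 2 (1 + g * x' (i+1))) = (\<Sum>i<N. a (Suc i))"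
  proof -
    have "(\<Sum>i. p * (1-p)^(i+w) * (1/2) * log 2 (1 + g * x' (i+1)))
        = (\<Sum>i<N. p * (1-p)^(i+w) * (1/2) * log 2 (1 + g * x' (i+1)))"
      by (rule suminf_finite) (auto simp: x'_def)
    also have "\<dots> = (\<Sum>i<N. a (Suc i))"
      by (rule sum.cong) (auto simp: x'_def a_def)
    finally show ?thesis .
  qed
  also have "\<dots> = (\<Sum>k=1..N. a k)"
    by (rule sum_bounds_lt_plus1)
  finally have first: "(\<Sum>i. p * (1-p)^(i+w) * (1/2) * log 2 (1 + g * x' (i+1))) = (\<Sum>k=1..N. a k)" .
  have f_head: "f i = reserve_weight p w N (Suc i) * c (Suc i)" if "i < N - 1" for i
  proof -
    have "Suc i < N" "min (i + 1) N = Suc i" using that by simp_all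
    then show ?thesis
      unfolding f_def c_def x'_def psum_truncate by (simp add: reserve_weight_def)
  qed
  have f_tail: "f (i + (N-1)) = (p^2 * (1-p)^(N-1+w) * c N) * (1-p)^i" for i
  proof -
    have "min (i + (N-1) + 1) N = N" using assms by auto
    then show ?thesis
      unfolding f_def c_def x'_def psum_truncate by (simp add: power_add algebra_simps)
  qed
  have "(\<lambda>i. (p^2 * (1-p)^(N-1+w) * c N) * (1-p)^i) sums (reserve_weight p w N N * c N)"
  proof -
    have "(\<lambda>i. (p^2 * (1-p)^(N-1+w) * c N) * (1-p)^i) sums ((p^2 * (1-p)^(N-1+w) * c N) * (1 / (1 - (1-p))))"
      using assms by (intro sums_mult geometric_sums) auto
    moreover have "(p^2 * (1-p)^(N-1+w) * c N) * (1 / (1 - (1-p))) = reserve_weight p w N N * c N"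
      using assms by (simp add: reserve_weight_def power2_eq_square)
    ultimately show ?thesis by simp
  qed
  then have "(\<lambda>i. f (i + (N-1))) sums (reserve_weight p w N N * c N)"
    by (simp only: f_tail)
  then have "f sums (reserve_weight p w N N * c N + (\<Sum>i<N-1. f i))"
    by (simp add: sums_iff_shift)
  moreover have "(\<Sum>i<N-1. f i) = (\<Sum>k=1..N-1. reserve_weight p w N k * c k)"
    using f_head sum_bounds_lt_plus1 [of "\<lambda>k. reserve_weight p w N k * c k" "N-1"] by simp
  moreover have "(\<Sum>k=1..N. reserve_weight p w N k * c k)
      = (\<Sum>k=1..N-1. reserve_weight p w N k * c k) + reserve_weight p w N N * c N"
    using assms by (cases N) auto
  ultimately have second: "suminf f = (\<Sum>k=1..N. reserve_weight p w N k * c k)"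
    by (simp add: sums_iff)
  show ?thesis
    unfolding T_N_def T_inf_def T_finite_def x'_def [symmetric] first f_def [symmetric] second
    by (simp add: a_def c_def mult_ac)
qed

lemma has_real_derivative_scaled_log:
  "0 < a \<Longrightarrow> ((\<lambda>t. c * log b (a + d * t)) has_real_derivative c * d / (a * ln b)) (at 0)"
  by (rule derivative_eq_intros refl | simp add: mult_ac)+

lemma T_finite_coordinate_deriv:
  assumes "1 \<le> w" "1 \<le> m" "m \<le> N"
    and alloc_pos: "\<And>k. k \<in> {1..N} \<Longrightarrow> 0 < 1 + g * x k"
    and reserve_pos: "\<And>k. k \<in> {1..N} \<Longrightarrow> 0 < 1 + g * ((B - psum x k) / real w)"
  shows "((\<lambda>t. T_finite p g B w N (x(m := x m + t))) has_real_derivative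
           g / (2 * ln 2) * (p * (1-p)^(m-1+w) / (1 + g * x m)
             - (\<Sum>k=m..N. reserve_weight p w N k / (1 + g * ((B - psum x k) / real w))))) (at 0)"
proof -
  define a where "a = (\<lambda>k. p * (1-p)^(k-1+w) / 2)"
  define c where "c = (\<lambda>k. reserve_weight p w N k * (real w / 2))"
  define A where "A = (\<lambda>k. 1 + g * x k)"
  define C where "C = (\<lambda>k. 1 + g * ((B - psum x k) / real w))"
  define dA where "dA = (\<lambda>k. if k = m then g else 0)"
  define dC where "dC = (\<lambda>k. if m \<le> k then - (g / real w) else 0)"
  have "T_finite p g B w N (x(m := x m + t)) =
          (\<Sum>k=1..N. a k * log 2 (A k + dA k * t)) + (\<Sum>k=1..N. c k * log 2 (C k + dC k * t))" for t
    unfolding T_finite_def psum_update [OF assms(2)] a_def c_def A_def C_def dA_def dC_def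
    by (intro arg_cong2 [where f = "(+)"] sum.cong refl)
       (auto simp: algebra_simps diff_divide_distrib add_divide_distrib)
  moreover have "((\<lambda>t. (\<Sum>k=1..N. a k * log 2 (A k + dA k * t)) + (\<Sum>k=1..N. c k * log 2 (C k + dC k * t)))
      has_real_derivative (\<Sum>k=1..N. a k * dA k / (A k * ln 2)) + (\<Sum>k=1..N. c k * dC k / (C k * ln 2))) (at 0)"
    using alloc_pos reserve_pos unfolding A_def C_def
    by (intro DERIV_add DERIV_sum has_real_derivative_scaled_log) auto
  moreover have "(\<Sum>k=1..N. a k * dA k / (A k * ln 2)) = g / (2 * ln 2) * (p * (1-p)^(m-1+w) / A m)"
  proof -
    have "(\<Sum>k=1..N. a k * dA k / (A k * ln 2)) = (\<Sum>k=1..N. if k = m then a m * g / (A m * ln 2) else 0)"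
      by (rule sum.cong) (auto simp: dA_def)
    with assms(2,3) show ?thesis by (simp add: a_def mult_ac)
  qed
  moreover have "(\<Sum>k=1..N. c k * dC k / (C k * ln 2))
      = - (g / (2 * ln 2) * (\<Sum>k=m..N. reserve_weight p w N k / C k))"
  proof -
    have "(\<Sum>k=1..N. c k * dC k / (C k * ln 2))
        = (\<Sum>k=1..N. if m \<le> k then - (g / (2 * ln 2) * (reserve_weight p w N k / C k)) else 0)"
      using assms(1) by (intro sum.cong) (auto simp: dC_def c_def mult_ac)
    also have "\<dots> = (\<Sum>k\<in>{1..N} \<inter> {k. m \<le> k}. - (g / (2 * ln 2) * (reserve_weight p w N k / C k)))"
      using sum.inter_restrict [of "{1..N}" "\<lambda>k. - (g / (2 * ln 2) * (reserve_weight p w N k / C k))" "{k. m \<le> k}"]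
      by simp
    also have "{1..N} \<inter> {k. m \<le> k} = {m..N}" using assms(2) by auto
    also have "(\<Sum>k=m..N. - (g / (2 * ln 2) * (reserve_weight p w N k / C k)))
        = - (g / (2 * ln 2) * (\<Sum>k=m..N. reserve_weight p w N k / C k))"
      by (simp add: sum_distrib_left sum_negf)
    finally show ?thesis .
  qed
  ultimately show ?thesis
    by (simp add: A_def C_def algebra_simps)
qed

lemma has_real_derivative_nonpos_at_right_max:
  fixes f :: "real \<Rightarrow> real"
  assumes "(f has_real_derivative D) (at x)" "0 < e"
    and "\<And>h. 0 < h \<Longrightarrow> h < e \<Longrightarrow> f (x + h) \<le> f x"
  shows "D \<le> 0"
proof (rule ccontr)
  assume "\<not> D \<le> 0"
  then obtain d where "0 < d" and inc: "\<And>h. 0 < h \<Longrightarrow> h < d \<Longrightarrow> f x < f (x + h)"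
    using DERIV_pos_inc_right [OF assms(1)] by force
  have "f x < f (x + min d e / 2)" using inc \<open>0 < d\<close> \<open>0 < e\<close> by simp
  moreover have "f (x + min d e / 2) \<le> f x" using assms(3) \<open>0 < d\<close> \<open>0 < e\<close> by simp
  ultimately show False by simp
qed

lemma has_real_derivative_nonneg_at_left_max:
  fixes f :: "real \<Rightarrow> real"
  assumes "(f has_real_derivative D) (at x)" "0 < e"
    and "\<And>h. 0 < h \<Longrightarrow> h < e \<Longrightarrow> f (x - h) \<le> f x"
  shows "0 \<le> D"
proof (rule ccontr)
  assume "\<not> 0 \<le> D"
  then obtain d where "0 < d" and dec: "\<And>h. 0 < h \<Longrightarrow> h < d \<Longrightarrow> f x < f (x - h)"
    using DERIV_neg_dec_left [OF assms(1)] by force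
  have "f x < f (x - min d e / 2)" using dec \<open>0 < d\<close> \<open>0 < e\<close> by simp
  moreover have "f (x - min d e / 2) \<le> f x" using assms(3) \<open>0 < d\<close> \<open>0 < e\<close> by simp
  ultimately show False by simp
qed

lemma convex_recursion_ge:
  fixes u v :: "nat \<Rightarrow> real"
  assumes "\<theta> \<le> 1" "u n = v n"
    and mono: "\<And>k. m \<le> k \<Longrightarrow> k < n \<Longrightarrow> v k < v (Suc k)"
    and rec: "\<And>k. m \<le> k \<Longrightarrow> k < n \<Longrightarrow> u k = \<theta> * v k + (1 - \<theta>) * u (Suc k)"
    and "m \<le> k" "k \<le> n"
  shows "v k \<le> u k"
  using \<open>k \<le> n\<close> \<open>m \<le> k\<close>
proof (induction k rule: inc_induct)
  case base
  show ?case using assms(2) by simp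
next
  case (step k)
  have "0 \<le> (1 - \<theta>) * (v (Suc k) - v k)"
    using mono [OF step.prems step.hyps(2)] assms(1) by simp
  then have "v k \<le> \<theta> * v k + (1 - \<theta>) * v (Suc k)"
    by (simp add: algebra_simps)
  also have "\<dots> \<le> \<theta> * v k + (1 - \<theta>) * u (Suc k)"
    using step.IH step.prems assms(1) by (simp add: mult_left_mono)
  finally show ?case using rec [OF step.prems step.hyps(2)] by simp
qed

lemma convex_recursion_strict_mono:
  fixes u v :: "nat \<Rightarrow> real"
  assumes "0 < \<theta>" "\<theta> \<le> 1" "u n = v n"
    and mono: "\<And>k. m \<le> k \<Longrightarrow> k < n \<Longrightarrow> v k < v (Suc k)"
    and rec: "\<And>k. m \<le> k \<Longrightarrow> k < n \<Longrightarrow> u k = \<theta> * v k + (1 - \<theta>) * u (Suc k)"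
    and "m \<le> k" "k < n"
  shows "u k < u (Suc k)"
proof -
  have "v (Suc k) \<le> u (Suc k)"
    by (rule convex_recursion_ge [of \<theta> u n v m]) (use assms in auto)
  then have "v k < u (Suc k)"
    using mono [OF assms(6,7)] by simp
  then have "\<theta> * v k + (1 - \<theta>) * u (Suc k) < u (Suc k)"
    using assms(1) by (simp add: algebra_simps)
  then show ?thesis using rec [OF assms(6,7)] by simp
qed

lemma feasible_N_iff_psum:
  "feasible_N B N x \<longleftrightarrow> (\<forall>j\<in>{1..N}. 0 \<le> x j) \<and> psum x N \<le> B"
  by (simp add: feasible_N_def psum_def)

lemma reserve_weight_pos: "0 < p \<Longrightarrow> p < 1 \<Longrightarrow> 0 < reserve_weight p w N k"
  by (simp add: reserve_weight_def)

locale T_N_maximizer =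
  fixes p g B :: real and w N :: nat and xi :: "nat \<Rightarrow> real"
  assumes p_pos: "0 < p" and p_less_1: "p < 1" and g_pos: "0 < g" and B_pos: "0 < B"
    and w_ge_1: "1 \<le> w" and N_ge_1: "1 \<le> N"
    and maximizer: "is_maximizer_N p g B w N xi"
begin

definition marg_alloc :: "nat \<Rightarrow> real" where
  "marg_alloc k = 1 / (1 + g * xi k)"

definition marg_reserve :: "nat \<Rightarrow> real" where
  "marg_reserve k = 1 / (1 + g * ((B - psum xi k) / real w))"

definition reserve_gain :: "nat \<Rightarrow> real" where
  "reserve_gain m = (\<Sum>k=m..N. reserve_weight p w N k * marg_reserve k)"

lemma xi_nonneg: "k \<in> {1..N} \<Longrightarrow> 0 \<le> xi k"
  using maximizer by (simp add: is_maximizer_N_def feasible_N_def)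

lemma psum_le_B: "k \<le> N \<Longrightarrow> psum xi k \<le> B"
proof -
  assume "k \<le> N"
  then have "psum xi k \<le> psum xi N"
    unfolding psum_def using xi_nonneg by (intro sum_mono2) auto
  also have "\<dots> \<le> B"
    using maximizer by (simp add: is_maximizer_N_def feasible_N_iff_psum)
  finally show ?thesis .
qed

lemma T_finite_le: "feasible_N B N eta \<Longrightarrow> T_finite p g B w N eta \<le> T_finite p g B w N xi"
  using maximizer T_N_eq_T_finite [OF p_pos p_less_1 N_ge_1] by (simp add: is_maximizer_N_def)

lemma marg_reserve_le_1: "k \<le> N \<Longrightarrow> marg_reserve k \<le> 1"
proof -
  assume "k \<le> N"
  then have "0 \<le> g * ((B - psum xi k) / real w)"
    using psum_le_B g_pos by simp
  then show ?thesis by (simp add: marg_reserve_def)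
qed

lemma coordinate_deriv:
  assumes "m \<in> {1..N}"
  shows "((\<lambda>t. T_finite p g B w N (xi(m := xi m + t))) has_real_derivative
           g / (2 * ln 2) * (p * (1-p)^(m-1+w) * marg_alloc m - reserve_gain m)) (at 0)"
proof -
  have "((\<lambda>t. T_finite p g B w N (xi(m := xi m + t))) has_real_derivative
           g / (2 * ln 2) * (p * (1-p)^(m-1+w) / (1 + g * xi m)
             - (\<Sum>k=m..N. reserve_weight p w N k / (1 + g * ((B - psum xi k) / real w))))) (at 0)"
    using assms xi_nonneg g_pos psum_le_B w_ge_1
    by (intro T_finite_coordinate_deriv) (auto simp: add_pos_nonneg)
  then show ?thesis
    by (simp add: marg_alloc_def reserve_gain_def marg_reserve_def)
qed

lemma first_order_increase:
  assumes "m \<in> {1..N}" "psum xi N < B"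
  shows "p * (1-p)^(m-1+w) * marg_alloc m \<le> reserve_gain m"
proof -
  have "g / (2 * ln 2) * (p * (1-p)^(m-1+w) * marg_alloc m - reserve_gain m) \<le> 0"
  proof (rule has_real_derivative_nonpos_at_right_max [OF coordinate_deriv [OF assms(1)]])
    show "0 < B - psum xi N" using assms(2) by simp
    fix h :: real assume "0 < h" "h < B - psum xi N"
    with assms(1) xi_nonneg have "feasible_N B N (xi(m := xi m + h))"
      by (auto simp: feasible_N_iff_psum psum_update)
    then show "T_finite p g B w N (xi(m := xi m + (0 + h))) \<le> T_finite p g B w N (xi(m := xi m + 0))"
      using T_finite_le by simp
  qed
  then show ?thesis using g_pos by (simp add: divide_le_0_iff mult_le_0_iff)
qed

lemma first_order_decrease:
  assumes "m \<in> {1..N}" "0 < xi m"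
  shows "reserve_gain m \<le> p * (1-p)^(m-1+w) * marg_alloc m"
proof -
  have "0 \<le> g / (2 * ln 2) * (p * (1-p)^(m-1+w) * marg_alloc m - reserve_gain m)"
  proof (rule has_real_derivative_nonneg_at_left_max [OF coordinate_deriv [OF assms(1)]])
    show "0 < xi m" by (fact assms(2))
    fix h :: real assume "0 < h" "h < xi m"
    with assms(1) xi_nonneg psum_le_B [of N] psum_update [of m xi "- h" N]
    have "feasible_N B N (xi(m := xi m + (0 - h)))"
      by (auto simp: feasible_N_iff_psum)
    then show "T_finite p g B w N (xi(m := xi m + (0 - h))) \<le> T_finite p g B w N (xi(m := xi m + 0))"
      using T_finite_le by simp
  qed
  then show ?thesis using g_pos by (simp add: zero_le_divide_iff zero_le_mult_iff)
qed

lemma budget_slack: "psum xi N < B"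
proof (rule ccontr)
  assume "\<not> psum xi N < B"
  then have exhausted: "psum xi N = B" using psum_le_B [of N] by simp
  define P where "P = {j \<in> {1..N}. 0 < xi j}"
  have "finite P" by (simp add: P_def)
  have "P \<noteq> {}"
  proof
    assume "P = {}"
    then have "xi j = 0" if "j \<in> {1..N}" for j
      using that xi_nonneg [OF that] by (auto simp: P_def)
    then have "psum xi N = 0" by (simp add: psum_def)
    then show False using exhausted B_pos by simp
  qed
  define m where "m = Max P"
  have "m \<in> P" using \<open>finite P\<close> \<open>P \<noteq> {}\<close> by (simp add: m_def)
  then have m: "m \<in> {1..N}" "0 < xi m" by (auto simp: P_def)
  have "psum xi k = B" if "m \<le> k" "k \<le> N" for k
  proof -
    have "xi j = 0" if "j \<in> {k+1..N}" for j
    proof -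
      have "j \<notin> P"
        using that \<open>m \<le> k\<close> Max_ge [OF \<open>finite P\<close>, of j] by (auto simp: m_def)
      then show ?thesis using that xi_nonneg [of j] by (simp add: P_def)
    qed
    then have "(\<Sum>j=k+1..N. xi j) = 0" by simp
    moreover have "psum xi N = psum xi k + (\<Sum>j=k+1..N. xi j)"
    proof -
      have "{1..N} = {1..k} \<union> {k+1..N}" using \<open>k \<le> N\<close> by auto
      then show ?thesis unfolding psum_def by (simp add: sum.union_disjoint)
    qed
    ultimately show ?thesis using exhausted by simp
  qed
  then have "reserve_gain m = (\<Sum>k=m..N. reserve_weight p w N k)"
    unfolding reserve_gain_def marg_reserve_def by (intro sum.cong) auto
  also have "\<dots> = p * (1-p)^(m-1+w)" using m(1) by (simp add: sum_reserve_weight)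
  finally have "reserve_gain m = p * (1-p)^(m-1+w)" .
  moreover have "marg_alloc m < 1"
  proof -
    have "0 < g * xi m" using m(2) g_pos by simp
    then show ?thesis by (simp add: marg_alloc_def)
  qed
  ultimately have "p * (1-p)^(m-1+w) * marg_alloc m < reserve_gain m"
    using p_pos p_less_1 by simp
  with first_order_decrease [OF m] show False by simp
qed

lemma reserve_gain_less:
  assumes "m \<in> {1..N}"
  shows "reserve_gain m < p * (1-p)^(m-1+w)"
proof -
  have weight_pos: "0 < reserve_weight p w N k" for k
    using p_pos p_less_1 by (rule reserve_weight_pos)
  have "marg_reserve N < 1"
  proof -
    have "0 < g * ((B - psum xi N) / real w)" using budget_slack g_pos w_ge_1 by simp
    then show ?thesis by (simp add: marg_reserve_def)
  qed
  then have "reserve_weight p w N N * marg_reserve N < reserve_weight p w N N"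
    using weight_pos [of N] by simp
  moreover have "reserve_weight p w N k * marg_reserve k \<le> reserve_weight p w N k" if "k \<in> {m..N}" for k
    using that marg_reserve_le_1 [of k] weight_pos [of k] by (simp add: mult_left_le)
  moreover have "N \<in> {m..N}" using assms by simp
  ultimately have "reserve_gain m < (\<Sum>k=m..N. reserve_weight p w N k)"
    unfolding reserve_gain_def by (intro sum_strict_mono_ex1) auto
  with assms show ?thesis by (simp add: sum_reserve_weight)
qed

lemma xi_pos:
  assumes "m \<in> {1..N}"
  shows "0 < xi m"
proof (rule ccontr)
  assume "\<not> 0 < xi m"
  then have "marg_alloc m = 1" using xi_nonneg [OF assms] by (simp add: marg_alloc_def)
  then show False
    using first_order_increase [OF assms budget_slack] reserve_gain_less [OF assms] by simp
qed

lemma first_order_eq: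
  assumes "m \<in> {1..N}"
  shows "p * (1-p)^(m-1+w) * marg_alloc m = reserve_gain m"
  using first_order_increase [OF assms budget_slack] first_order_decrease [OF assms xi_pos [OF assms]]
  by (rule order_antisym)

lemma marg_alloc_last: "marg_alloc N = marg_reserve N"
proof -
  have "p * (1-p)^(N-1+w) * marg_alloc N = p * (1-p)^(N-1+w) * marg_reserve N"
    using first_order_eq [of N] N_ge_1 by (simp add: reserve_gain_def reserve_weight_def)
  then show ?thesis using p_pos p_less_1 by simp
qed

lemma marg_alloc_recursion:
  assumes "1 \<le> m" "m < N"
  shows "marg_alloc m = p * marg_reserve m + (1-p) * marg_alloc (Suc m)"
proof -
  define a where "a = p * (1-p)^(m-1+w)"
  have "a > 0" using p_pos p_less_1 by (simp add: a_def)
  have "a * marg_alloc m = reserve_gain m"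
    using first_order_eq [of m] assms by (simp add: a_def)
  also have "\<dots> = reserve_weight p w N m * marg_reserve m + reserve_gain (Suc m)"
    using assms(2) by (simp add: reserve_gain_def sum.atLeast_Suc_atMost)
  also have "reserve_weight p w N m = a * p"
    using assms(2) by (simp add: reserve_weight_def a_def power2_eq_square)
  also have "reserve_gain (Suc m) = a * (1-p) * marg_alloc (Suc m)"
  proof -
    have "p * (1-p)^(Suc m - 1 + w) = a * (1-p)"
      using assms(1) by (cases m) (simp_all add: a_def)
    then show ?thesis using first_order_eq [of "Suc m"] assms by simp
  qed
  finally have "a * marg_alloc m = a * (p * marg_reserve m + (1-p) * marg_alloc (Suc m))"
    by (simp add: algebra_simps)
  with \<open>a > 0\<close> show ?thesis by simp
qed

lemma marg_reserve_strict_mono: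
  assumes "1 \<le> m" "m < N"
  shows "marg_reserve m < marg_reserve (Suc m)"
proof -
  have "psum xi m < psum xi (Suc m)"
    using xi_pos [of "Suc m"] assms by (simp add: psum_def)
  then have "g * ((B - psum xi (Suc m)) / real w) < g * ((B - psum xi m) / real w)"
    using g_pos w_ge_1 by (simp add: divide_strict_right_mono)
  moreover have "0 \<le> g * ((B - psum xi (Suc m)) / real w)"
    using psum_le_B [of "Suc m"] assms g_pos by simp
  ultimately show ?thesis
    by (simp add: marg_reserve_def divide_strict_left_mono)
qed

lemma marg_alloc_strict_mono: "1 \<le> m \<Longrightarrow> m < N \<Longrightarrow> marg_alloc m < marg_alloc (Suc m)"
  using p_pos p_less_1 marg_alloc_last marg_reserve_strict_mono marg_alloc_recursion
  by (intro convex_recursion_strict_mono [of p marg_alloc N marg_reserve 1]) auto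

lemma xi_strict_decreasing:
  assumes "1 \<le> m" "m < N"
  shows "xi (Suc m) < xi m"
proof -
  have "0 < 1 + g * xi m" "0 < 1 + g * xi (Suc m)"
    using xi_pos [of m] xi_pos [of "Suc m"] assms g_pos by (simp_all add: add_pos_pos)
  with marg_alloc_strict_mono [OF assms] have "g * xi (Suc m) < g * xi m"
    by (simp add: marg_alloc_def field_simps)
  with g_pos show ?thesis by simp
qed

end

theorem lemma5:
  fixes p g B :: real and w N :: nat and xi :: "nat \<Rightarrow> real"
  assumes "0 < p" "p < 1" "0 < g" "0 < B" "1 \<le> w" "1 \<le> N"
    and "is_maximizer_N p g B w N xi"
  shows "(\<forall>j\<in>{1..N}. 0 < xi j) \<and> (\<forall>j. 1 \<le> j \<and> j < N \<longrightarrow> xi (j+1) < xi j)"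
proof -
  interpret T_N_maximizer p g B w N xi
    using assms by unfold_locales
  show ?thesis using xi_pos xi_strict_decreasing by auto
qed

end
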